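(* Let $(A_k)$ be a sequence in $S_n$ converging to $A\in S_n$. Then there is $k_0$ such that for all $k\ge k_0$ and all $i\in\{1,\dots,n\}$ there is a unique $\kappa(k,i)\in\{1,\dots,n\}$ with $\Lambda_{\kappa(k,i)}(A_k)=\Lambda_i(A)$ and, if $\kappa(k,i)\ne n$, $\Lambda_{\kappa(k,i)+1}(A_k)\neq\Lambda_i(A)$. Moreover, if $i'$ is minimal with $\mathrm{syst}_{i'}(A)=\mathrm{syst}_i(A)$, then $\lim_{k\to\infty}\mathrm{syst}_{j_k}(A_k)=\mathrm{syst}_i(A)$ for every choice of integers $j_k$ with $\kappa(k,i'-1)<j_k\le\kappa(k,i)$.
   Context: $S_n=\mathrm{SO}_n\backslash\mathrm{SL}_n\mathbb R$; a point is represented by $A\in\mathrm{SL}_n\mathbb R$ up to left $\mathrm{SO}_n$. For $i=1,\dots,n$, $\mathrm{syst}_i(A)=\inf\{r>0:\dim_{\mathbb R}\mathrm{Span}_{\mathbb R}\{v\in\mathbb Z^n:|Av|<r\}\ge i\}$, and $\Lambda_i(A)=\mathrm{Span}_{\mathbb R}\{v\in\mathbb Z^n:|Av|\le\mathrm{syst}_i(A)\}$; by convention $\Lambda_0(A)=0$ (and correspondingly $\kappa(k,0)=0$). Thus $0\subsetneq\Lambda_1(A)\subset\dots\subset\Lambda_n(A)=\mathbb R^n$ with $\dim\Lambda_i(A)\ge i$. *)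

theory Defs
  imports "HOL-Analysis.Analysis"
begin

text \<open>Points of S_n = SO_n \ SL_n(R) are represented by matrices in SL_n(R);
  the dimension n is CARD('n).\<close>

definition SL :: "(real^'n^'n) set" where
  "SL = {A. det A = 1}"

definition SO :: "(real^'n^'n) set" where
  "SO = {Q. orthogonal_matrix Q \<and> det Q = 1}"

definition intvecs :: "(real^'n) set" where
  "intvecs = {v. \<forall>i. v $ i \<in> \<int>}"

definition syst :: "nat \<Rightarrow> real^'n^'n \<Rightarrow> real" where
  "syst i A = Inf {r. r > 0 \<and> dim (span {v \<in> intvecs. norm (A *v v) < r}) \<ge> i}"

definition Lam :: "nat \<Rightarrow> real^'n^'n \<Rightarrow> (real^'n) set" where
  "Lam i A = (if i = 0 then {0} else span {v \<in> intvecs. norm (A *v v) \<le> syst i A})"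

text \<open>Convergence in the quotient S_n: some representatives converge.\<close>
definition converges_Sn :: "(nat \<Rightarrow> real^'n^'n) \<Rightarrow> real^'n^'n \<Rightarrow> bool" where
  "converges_Sn As A \<longleftrightarrow> (\<exists>Q. (\<forall>k. Q k \<in> SO) \<and> (\<lambda>k. Q k ** As k) \<longlonglongrightarrow> A)"

definition kappa :: "real^'n^'n \<Rightarrow> real^'n^'n \<Rightarrow> nat \<Rightarrow> nat" where
  "kappa B A i = (if i = 0 then 0 else
     (THE c. c \<in> {1..CARD('n)} \<and> Lam c B = Lam i A \<and>
             (c \<noteq> CARD('n) \<longrightarrow> Lam (c + 1) B \<noteq> Lam i A)))"

end

theory Submission
  imports Defs
begin

(* The proof compares the lattice Z^n measured by the norms |B v| and |A v|.
   If B is delta-close to A, i.e. (1 - delta)|A v| <= |B v| <= (1 + delta)|A v| for all v,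
   then syst_c(B) is within a factor 1 +- delta of syst_c(A).  Since A is bounded below,
   only finitely many lattice vectors are short, so the values |A v| have a gap above
   each syst_i(A): nothing lies in (syst_i(A), R_i).  For delta small the vectors
   spanning Lambda_d(B), d = dim Lambda_i(A), therefore still satisfy |A v| <= syst_i(A),
   which gives Lambda_d(B) = Lambda_i(A) by a dimension count, and dim Lambda_{d+1}(B) > d
   shows that d is the index kappa(B, i).  Finally, indices strictly between
   kappa(B, i' - 1) = i' - 1 and kappa(B, i) = d all carry the same value syst_i(A),
   so the corresponding systoles of B converge to it. *)

lemma matrix_vector_norm_le:
  fixes M :: "real^'n^'m"
  shows "norm (M *v x) \<le> real CARD('m) * real CARD('n) * norm M * norm x"
proof -
  have entry: "\<bar>M $ i $ j\<bar> \<le> norm M" for i j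
    using component_le_norm_cart[of "M $ i" j] Finite_Cartesian_Product.norm_nth_le[of M i]
    by linarith
  have "norm (M *v x) \<le> onorm ((*v) M) * norm x"
    by (rule onorm) simp
  also have "\<dots> \<le> real CARD('m) * real CARD('n) * norm M * norm x"
    by (intro mult_right_mono onorm_le_matrix_component entry) simp
  finally show ?thesis .
qed

definition bounded_below_matrix :: "real^'n^'m \<Rightarrow> bool" where
  "bounded_below_matrix M \<longleftrightarrow> (\<exists>c>0. \<forall>x. c * norm x \<le> norm (M *v x))"

lemma invertible_imp_bounded_below:
  fixes A :: "real^'n^'n"
  assumes "invertible A"
  shows "bounded_below_matrix A"
  unfolding bounded_below_matrix_def
  by (metis linear_inj_bounded_below_pos matrix_vector_mul_linear inj_matrix_vector_mult[OF assms])

lemma finite_intvecs_bounded: "finite {v :: real^'n. v \<in> intvecs \<and> norm v \<le> R}"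
proof -
  define N where "N = \<lceil>R\<rceil>"
  have "{v :: real^'n. v \<in> intvecs \<and> norm v \<le> R} \<subseteq> (\<lambda>f. \<chi> i. real_of_int (f i)) ` (PiE UNIV (\<lambda>_. {-N..N}))"
  proof
    fix v :: "real^'n" assume "v \<in> {v. v \<in> intvecs \<and> norm v \<le> R}"
    hence v_int: "v \<in> intvecs" and v_le: "norm v \<le> R" by auto
    have floor_eq: "real_of_int \<lfloor>v $ i\<rfloor> = v $ i" for i
      using v_int by (auto simp: intvecs_def elim!: Ints_cases)
    have "\<lfloor>v $ i\<rfloor> \<in> {-N..N}" for i
    proof -
      have "\<bar>v $ i\<bar> \<le> R" using component_le_norm_cart[of v i] v_le by linarith
      hence "\<bar>real_of_int \<lfloor>v $ i\<rfloor>\<bar> \<le> real_of_int N"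
        using floor_eq[of i] le_of_int_ceiling[of R] unfolding N_def by linarith
      hence "\<bar>\<lfloor>v $ i\<rfloor>\<bar> \<le> N" by (metis of_int_abs of_int_le_iff)
      thus ?thesis by (simp add: abs_le_iff)
    qed
    moreover have "v = (\<chi> i. real_of_int \<lfloor>v $ i\<rfloor>)"
      by (simp add: vec_eq_iff floor_eq)
    ultimately show "v \<in> (\<lambda>f. \<chi> i. real_of_int (f i)) ` (PiE UNIV (\<lambda>_. {-N..N}))"
      by (intro image_eqI[where x = "\<lambda>i. \<lfloor>v $ i\<rfloor>"]) auto
  qed
  thus ?thesis by (rule finite_subset) (auto intro!: finite_PiE)
qed

lemma finite_short_intvecs:
  fixes B :: "real^'n^'m"
  assumes "bounded_below_matrix B"
  shows "finite {v \<in> intvecs. norm (B *v v) \<le> r}"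
proof -
  obtain c where c: "c > 0" "\<And>x. c * norm x \<le> norm (B *v x)"
    using assms unfolding bounded_below_matrix_def by blast
  have "{v \<in> intvecs. norm (B *v v) \<le> r} \<subseteq> {v. v \<in> intvecs \<and> norm v \<le> r / c}"
    using c by (auto simp: pos_le_divide_eq mult.commute intro: order_trans)
  thus ?thesis by (rule finite_subset) (rule finite_intvecs_bounded)
qed

lemma length_gap:
  fixes B :: "real^'n^'m"
  assumes "bounded_below_matrix B"
  shows "\<exists>r>s. \<forall>v\<in>intvecs. norm (B *v v) < r \<longrightarrow> norm (B *v v) \<le> s"
proof -
  define N where "N = (\<lambda>v. norm (B *v v)) ` {v \<in> intvecs. norm (B *v v) \<le> s + 1 \<and> s < norm (B *v v)}"
  have "finite N"
    unfolding N_def by (rule finite_imageI, rule finite_subset[OF _ finite_short_intvecs[OF assms]]) auto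
  define r where "r = Min (insert (s + 1) N)"
  have "r > s" unfolding r_def using \<open>finite N\<close> by (auto simp: N_def)
  moreover have "norm (B *v v) \<le> s" if "v \<in> intvecs" "norm (B *v v) < r" for v
  proof (rule ccontr)
    assume "\<not> norm (B *v v) \<le> s"
    moreover have "r \<le> s + 1" unfolding r_def using \<open>finite N\<close> by simp
    ultimately have "norm (B *v v) \<in> N" unfolding N_def using that by auto
    hence "r \<le> norm (B *v v)" unfolding r_def using \<open>finite N\<close> by simp
    thus False using that by simp
  qed
  ultimately show ?thesis by blast
qed

definition syst_radii :: "nat \<Rightarrow> real^'n^'n \<Rightarrow> real set" where
  "syst_radii c B = {r. r > 0 \<and> dim (span {v \<in> intvecs. norm (B *v v) < r}) \<ge> c}"

lemma syst_eq_Inf: "syst c B = Inf (syst_radii c B)"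
  by (simp add: syst_def syst_radii_def)

lemma syst_radii_bdd_below: "bdd_below (syst_radii c B)"
  unfolding syst_radii_def bdd_below_def by (rule exI[of _ 0]) auto

lemma dim_short_mono:
  fixes B :: "real^'n^'n"
  assumes "r \<le> r'"
  shows "dim (span {v \<in> intvecs. norm (B *v v) < r}) \<le> dim (span {v \<in> intvecs. norm (B *v v) < r'})"
  using assms by (intro dim_subset span_mono) auto

text \<open>The standard basis vectors are lattice vectors, so some radius captures all of them;
  hence every systole up to n is a genuine infimum.\<close>
lemma syst_radii_nonempty:
  fixes B :: "real^'n^'n"
  assumes "c \<le> CARD('n)"
  shows "syst_radii c B \<noteq> {}"
proof -
  define r where "r = 1 + (\<Sum>b\<in>Basis. norm (B *v b))"
  have "0 \<le> (\<Sum>b\<in>(Basis::(real^'n) set). norm (B *v b))" by (simp add: sum_nonneg)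
  hence "r > 0" unfolding r_def by linarith
  have "(Basis :: (real^'n) set) \<subseteq> {v \<in> intvecs. norm (B *v v) < r}"
  proof
    fix b :: "real^'n" assume b: "b \<in> Basis"
    hence "norm (B *v b) \<le> (\<Sum>b\<in>Basis. norm (B *v b))" by (intro member_le_sum) auto
    moreover have "b \<in> intvecs" using b by (auto simp: intvecs_def Basis_vec_def axis_def)
    ultimately show "b \<in> {v \<in> intvecs. norm (B *v v) < r}" unfolding r_def by auto
  qed
  hence "span (Basis :: (real^'n) set) \<subseteq> span {v \<in> intvecs. norm (B *v v) < r}"
    by (rule span_mono)
  hence "span {v \<in> intvecs. norm (B *v v) < r} = UNIV" by auto
  hence "dim (span {v \<in> intvecs. norm (B *v v) < r}) = CARD('n)" by simp
  hence "r \<in> syst_radii c B" using \<open>r > 0\<close> assms by (simp add: syst_radii_def)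
  thus ?thesis by blast
qed

lemma syst_nonneg: "c \<le> CARD('n) \<Longrightarrow> 0 \<le> syst c (B::real^'n^'n)"
  unfolding syst_eq_Inf by (rule cInf_greatest[OF syst_radii_nonempty]) (auto simp: syst_radii_def)

lemma syst_mono:
  fixes B :: "real^'n^'n"
  assumes "a \<le> b" "b \<le> CARD('n)"
  shows "syst a B \<le> syst b B"
  unfolding syst_eq_Inf
  by (rule cInf_superset_mono) (use assms syst_radii_nonempty syst_radii_bdd_below in \<open>auto simp: syst_radii_def\<close>)

lemma syst_le_scaled:
  fixes A B :: "real^'n^'n"
  assumes "C > 0" "\<forall>v\<in>intvecs. norm (B *v v) \<le> C * norm (A *v v)" "c \<le> CARD('n)"
  shows "syst c B \<le> C * syst c A"
proof -
  have "syst c B / C \<le> r" if r: "r \<in> syst_radii c A" for r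
  proof -
    have "{v \<in> intvecs. norm (A *v v) < r} \<subseteq> {v \<in> intvecs. norm (B *v v) < C * r}"
      using assms(1,2) by (auto intro: order.strict_trans1)
    hence "dim (span {v \<in> intvecs. norm (A *v v) < r}) \<le> dim (span {v \<in> intvecs. norm (B *v v) < C * r})"
      by (intro dim_subset span_mono)
    hence "C * r \<in> syst_radii c B" using r assms(1) unfolding syst_radii_def by auto
    hence "syst c B \<le> C * r" unfolding syst_eq_Inf by (rule cInf_lower[OF _ syst_radii_bdd_below])
    thus ?thesis using assms(1) by (simp add: divide_le_eq mult.commute)
  qed
  hence "syst c B / C \<le> syst c A" unfolding syst_eq_Inf[of c A]
    by (intro cInf_greatest syst_radii_nonempty assms(3)) auto
  thus ?thesis using assms(1) by (simp add: divide_le_eq mult.commute)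
qed

text \<open>Lambda_c(B) contains c independent vectors (for B bounded below, so that the
  infimum defining syst c is attained).\<close>
lemma dim_Lam_ge:
  fixes B :: "real^'n^'n"
  assumes "bounded_below_matrix B" "1 \<le> c" "c \<le> CARD('n)"
  shows "c \<le> dim (Lam c B)"
proof -
  obtain r where r: "r > syst c B" "\<forall>v\<in>intvecs. norm (B *v v) < r \<longrightarrow> norm (B *v v) \<le> syst c B"
    using length_gap[OF assms(1)] by blast
  obtain x where x: "x \<in> syst_radii c B" "x < r"
    using r(1) cInf_less_iff[OF syst_radii_nonempty[OF assms(3)] syst_radii_bdd_below]
    unfolding syst_eq_Inf by blast
  have "c \<le> dim (span {v \<in> intvecs. norm (B *v v) < x})"
    using x(1) unfolding syst_radii_def by auto
  also have "\<dots> \<le> dim (span {v \<in> intvecs. norm (B *v v) < r})"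
    using x(2) by (intro dim_short_mono) simp
  also have "\<dots> \<le> dim (span {v \<in> intvecs. norm (B *v v) \<le> syst c B})"
    using r(2) by (intro dim_subset span_mono) auto
  finally show ?thesis using assms(2) unfolding Lam_def by simp
qed

lemma syst_le_if_le_dim_Lam:
  fixes A :: "real^'n^'n"
  assumes "1 \<le> i" "i \<le> CARD('n)" "m \<le> dim (Lam i A)"
  shows "syst m A \<le> syst i A"
proof (rule dense_ge)
  fix r assume r: "syst i A < r"
  hence "r > 0" using syst_nonneg[OF assms(2), of A] by linarith
  have "m \<le> dim (span {v \<in> intvecs. norm (A *v v) \<le> syst i A})"
    using assms unfolding Lam_def by simp
  also have "\<dots> \<le> dim (span {v \<in> intvecs. norm (A *v v) < r})"
    using r by (intro dim_subset span_mono) auto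
  finally have "r \<in> syst_radii m A" using \<open>r > 0\<close> unfolding syst_radii_def by auto
  thus "syst m A \<le> r" unfolding syst_eq_Inf by (rule cInf_lower[OF _ syst_radii_bdd_below])
qed

lemma Lam_mono:
  fixes B :: "real^'n^'n"
  assumes "1 \<le> a" "a \<le> b" "b \<le> CARD('n)"
  shows "Lam a B \<subseteq> Lam b B"
  using assms syst_mono[OF assms(2,3), of B] unfolding Lam_def by (auto intro!: span_mono)

text \<open>Since the filtration is monotone, at most one index c is the last one with
  Lambda_c(B) = V; this is the uniqueness part of the definition of kappa.\<close>
lemma last_Lam_index_unique:
  fixes B :: "real^'n^'n"
  assumes "c1 \<in> {1..CARD('n)}" "Lam c1 B = V" "c1 \<noteq> CARD('n) \<longrightarrow> Lam (c1 + 1) B \<noteq> V"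
      "c2 \<in> {1..CARD('n)}" "Lam c2 B = V" "c2 \<noteq> CARD('n) \<longrightarrow> Lam (c2 + 1) B \<noteq> V"
  shows "c1 = c2"
proof -
  have False if "a \<in> {1..CARD('n)}" "Lam a B = V" "a \<noteq> CARD('n) \<longrightarrow> Lam (a + 1) B \<noteq> V"
      "b \<in> {1..CARD('n)}" "Lam b B = V" "a < b" for a b
    using that Lam_mono[of a "a + 1" B] Lam_mono[of "a + 1" b B] by auto
  thus ?thesis using assms by (metis linorder_neqE_nat)
qed

lemma orthogonal_mult_invariant:
  fixes Q M :: "real^'n^'n"
  assumes "orthogonal_matrix Q"
  shows "syst c (Q ** M) = syst c M" "Lam c (Q ** M) = Lam c M" "kappa (Q ** M) A i = kappa M A i"
proof -
  have "orthogonal_transformation ((*v) Q)"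
    using assms by (simp add: orthogonal_transformation_matrix)
  hence *: "norm ((Q ** M) *v v) = norm (M *v v)" for v
    using orthogonal_transformation_norm by (simp add: matrix_vector_mul_assoc[symmetric])
  show syst_eq: "syst c (Q ** M) = syst c M" for c unfolding syst_def * ..
  show **: "Lam c (Q ** M) = Lam c M" for c unfolding Lam_def * syst_eq ..
  show "kappa (Q ** M) A i = kappa M A i" unfolding kappa_def ** ..
qed

definition close_within :: "real \<Rightarrow> real^'n^'m \<Rightarrow> real^'n^'m \<Rightarrow> bool" where
  "close_within \<delta> A B \<longleftrightarrow>
     (\<forall>v. norm (B *v v) \<le> (1 + \<delta>) * norm (A *v v) \<and> (1 - \<delta>) * norm (A *v v) \<le> norm (B *v v))"

lemma close_within_perturbation:
  fixes A B :: "real^'n^'m"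
  assumes "c > 0" "\<And>x. c * norm x \<le> norm (A *v x)"
  shows "close_within (real CARD('m) * real CARD('n) * norm (B - A) / c) A B"
proof -
  define \<delta> where "\<delta> = real CARD('m) * real CARD('n) * norm (B - A) / c"
  have err: "norm ((B - A) *v v) \<le> \<delta> * norm (A *v v)" for v
  proof -
    have "norm ((B - A) *v v) \<le> real CARD('m) * real CARD('n) * norm (B - A) * norm v"
      by (rule matrix_vector_norm_le)
    also have "\<dots> \<le> real CARD('m) * real CARD('n) * norm (B - A) * (norm (A *v v) / c)"
      using assms by (intro mult_left_mono) (auto simp: pos_le_divide_eq mult.commute)
    finally show ?thesis unfolding \<delta>_def by simp
  qed
  have "norm (B *v v) \<le> (1 + \<delta>) * norm (A *v v) \<and> (1 - \<delta>) * norm (A *v v) \<le> norm (B *v v)" for v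
  proof -
    have eq: "B *v v = A *v v + (B - A) *v v" by (simp add: matrix_vector_mult_diff_rdistrib)
    have "norm (B *v v) \<le> norm (A *v v) + norm ((B - A) *v v)"
      by (subst eq) (rule norm_triangle_ineq)
    moreover have "norm (A *v v) \<le> norm (B *v v) + norm ((B - A) *v v)"
      by (metis eq add_diff_cancel_right' norm_triangle_ineq4)
    ultimately show ?thesis using err[of v] unfolding distrib_right left_diff_distrib by linarith
  qed
  thus ?thesis unfolding close_within_def \<delta>_def[symmetric] by blast
qed

lemma tendsto_imp_close_within:
  fixes A :: "real^'n^'m"
  assumes "bounded_below_matrix A" "B \<longlonglongrightarrow> A"
  obtains \<delta> where "\<delta> \<longlonglongrightarrow> 0" "\<And>k. 0 \<le> \<delta> k" "\<And>k. close_within (\<delta> k) A (B k)"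
proof -
  obtain c where c: "c > 0" "\<And>x. c * norm x \<le> norm (A *v x)"
    using assms(1) unfolding bounded_below_matrix_def by blast
  define \<delta> where "\<delta> k = real CARD('m) * real CARD('n) * norm (B k - A) / c" for k
  have "(\<lambda>k. norm (B k - A)) \<longlonglongrightarrow> 0"
    using assms(2) by (simp add: LIM_zero tendsto_norm_zero)
  hence "\<delta> \<longlonglongrightarrow> real CARD('m) * real CARD('n) * 0 / c"
    unfolding \<delta>_def using c(1) by (intro tendsto_intros) auto
  moreover have "0 \<le> \<delta> k" for k using c by (simp add: \<delta>_def)
  ultimately show thesis using close_within_perturbation[OF c] by (intro that[of \<delta>]) (simp_all add: \<delta>_def)
qed

lemma close_within_bounded_below:
  fixes A B :: "real^'n^'m"
  assumes "bounded_below_matrix A" "close_within \<delta> A B" "\<delta> < 1"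
  shows "bounded_below_matrix B"
proof -
  obtain c where c: "c > 0" "\<And>x. c * norm x \<le> norm (A *v x)"
    using assms(1) unfolding bounded_below_matrix_def by blast
  have "(1 - \<delta>) * c * norm x \<le> norm (B *v x)" for x
  proof -
    have "(1 - \<delta>) * c * norm x \<le> (1 - \<delta>) * norm (A *v x)"
      using c(2)[of x] assms(3) by (simp add: mult.assoc mult_left_mono)
    also have "\<dots> \<le> norm (B *v x)" using assms(2) by (simp add: close_within_def)
    finally show ?thesis .
  qed
  thus ?thesis using c(1) assms(3) unfolding bounded_below_matrix_def by (auto intro!: exI[of _ "(1 - \<delta>) * c"])
qed

lemma syst_close_within:
  fixes A B :: "real^'n^'n"
  assumes "close_within \<delta> A B" "0 \<le> \<delta>" "c \<le> CARD('n)"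
  shows "syst c B \<le> (1 + \<delta>) * syst c A" and "\<delta> < 1 \<Longrightarrow> (1 - \<delta>) * syst c A \<le> syst c B"
proof -
  show "syst c B \<le> (1 + \<delta>) * syst c A"
    using assms by (intro syst_le_scaled) (auto simp: close_within_def)
  assume "\<delta> < 1"
  have "norm (A *v v) \<le> inverse (1 - \<delta>) * norm (B *v v)" for v
    using assms(1) \<open>\<delta> < 1\<close> unfolding close_within_def by (simp add: field_simps)
  hence "syst c A \<le> inverse (1 - \<delta>) * syst c B"
    using \<open>\<delta> < 1\<close> assms(3) by (intro syst_le_scaled) auto
  thus "(1 - \<delta>) * syst c A \<le> syst c B" using \<open>\<delta> < 1\<close> by (simp add: field_simps)
qed

definition Lam_stable :: "real^'n^'n \<Rightarrow> real^'n^'n \<Rightarrow> nat \<Rightarrow> bool" where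
  "Lam_stable B A i \<longleftrightarrow> Lam (dim (Lam i A)) B = Lam i A \<and>
     (dim (Lam i A) \<noteq> CARD('n) \<longrightarrow> Lam (dim (Lam i A) + 1) B \<noteq> Lam i A)"

text \<open>The vectors spanning Lambda_d(B) are still A-short, provided the distortion delta
  cannot push lengths across the gap (syst_i(A), R) of A.\<close>
lemma Lam_subset_of_close:
  fixes A B :: "real^'n^'n"
  assumes i: "i \<in> {1..CARD('n)}" and close: "close_within \<delta> A B" "0 \<le> \<delta>" "\<delta> < 1"
    and gap: "\<forall>v\<in>intvecs. norm (A *v v) < R \<longrightarrow> norm (A *v v) \<le> syst i A"
    and small: "(1 + \<delta>) * syst i A < (1 - \<delta>) * R"
  shows "Lam (dim (Lam i A)) B \<subseteq> Lam i A"
proof -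
  define d where "d = dim (Lam i A)"
  have "d \<le> CARD('n)" unfolding d_def by (rule dim_subset_UNIV_cart)
  have "{v \<in> intvecs. norm (B *v v) \<le> syst d B} \<subseteq> {v \<in> intvecs. norm (A *v v) \<le> syst i A}"
  proof safe
    fix v assume v: "v \<in> intvecs" "norm (B *v v) \<le> syst d B"
    have "(1 - \<delta>) * norm (A *v v) \<le> norm (B *v v)" using close(1) by (simp add: close_within_def)
    also have "\<dots> \<le> syst d B" by (rule v(2))
    also have "\<dots> \<le> (1 + \<delta>) * syst d A" by (rule syst_close_within(1)[OF close(1,2) \<open>d \<le> CARD('n)\<close>])
    also have "\<dots> \<le> (1 + \<delta>) * syst i A"
      using syst_le_if_le_dim_Lam[of i d A] i close(2) by (intro mult_left_mono) (auto simp: d_def)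
    also have "\<dots> < (1 - \<delta>) * R" by (rule small)
    finally have "norm (A *v v) < R" using close(3) by simp
    thus "norm (A *v v) \<le> syst i A" using gap v(1) by blast
  qed
  hence "Lam d B \<subseteq> span {v \<in> intvecs. norm (A *v v) \<le> syst i A}"
    unfolding Lam_def by (auto intro: span_mono[THEN subsetD] span_zero)
  moreover have "Lam i A = span {v \<in> intvecs. norm (A *v v) \<le> syst i A}"
    using i by (simp add: Lam_def)
  ultimately show ?thesis unfolding d_def by simp
qed

text \<open>The inclusion is an equality by a dimension count, and Lambda_{d+1}(B) is too big.\<close>
lemma Lam_stable_of_subset:
  fixes A B :: "real^'n^'n"
  assumes "bounded_below_matrix A" "bounded_below_matrix B" "i \<in> {1..CARD('n)}"
    and sub: "Lam (dim (Lam i A)) B \<subseteq> Lam i A"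
  shows "Lam_stable B A i"
proof -
  define d where "d = dim (Lam i A)"
  have d: "1 \<le> d" "d \<le> CARD('n)"
    using dim_Lam_ge[OF assms(1), of i] assms(3) dim_subset_UNIV_cart[of "Lam i A"]
    unfolding d_def by auto
  have "dim (Lam i A) \<le> dim (Lam d B)"
    using dim_Lam_ge[OF assms(2) d] unfolding d_def by simp
  hence "Lam d B = Lam i A"
    using subspace_dim_equal[of "Lam d B" "Lam i A"] sub unfolding d_def by (simp add: Lam_def)
  moreover have "Lam (d + 1) B \<noteq> Lam i A" if "d \<noteq> CARD('n)"
    using dim_Lam_ge[OF assms(2), of "d + 1"] d that unfolding d_def by auto
  ultimately show ?thesis unfolding Lam_stable_def d_def by blast
qed

lemma Lam_stable_near:
  fixes A :: "real^'n^'n"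
  assumes A: "bounded_below_matrix A" and i: "i \<in> {1..CARD('n)}"
  obtains \<epsilon> where "\<epsilon> > 0" "\<And>\<delta> B. 0 \<le> \<delta> \<Longrightarrow> \<delta> < \<epsilon> \<Longrightarrow> close_within \<delta> A B \<Longrightarrow> Lam_stable B A i"
proof -
  define s where "s = syst i A"
  obtain R where R: "R > s" "\<forall>v\<in>intvecs. norm (A *v v) < R \<longrightarrow> norm (A *v v) \<le> s"
    using length_gap[OF A] unfolding s_def by blast
  have "0 \<le> s" using syst_nonneg i unfolding s_def by auto
  hence "R > 0" using R(1) by linarith
  define \<epsilon> where "\<epsilon> = (R - s) / (2 * R)"
  have "\<epsilon> > 0" using R(1) \<open>R > 0\<close> by (simp add: \<epsilon>_def)
  moreover have "Lam_stable B A i" if \<delta>: "0 \<le> \<delta>" "\<delta> < \<epsilon>" and close: "close_within \<delta> A B" for \<delta> B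
  proof -
    have "\<delta> * (2 * R) < R - s" using \<delta>(2) \<open>R > 0\<close> by (simp add: \<epsilon>_def pos_less_divide_eq)
    moreover have "\<delta> * (R + s) \<le> \<delta> * (2 * R)" using \<delta>(1) R(1) by (intro mult_left_mono) auto
    moreover have "\<epsilon> \<le> 1 / 2" using \<open>0 \<le> s\<close> \<open>R > 0\<close> by (simp add: \<epsilon>_def field_simps)
    ultimately have small: "(1 + \<delta>) * s < (1 - \<delta>) * R" and "\<delta> < 1"
      using \<delta>(2) by (auto simp: algebra_simps)
    show ?thesis
      using Lam_subset_of_close[OF i close \<delta>(1) \<open>\<delta> < 1\<close>] R(2) small
      by (intro Lam_stable_of_subset[OF A close_within_bounded_below[OF A close \<open>\<delta> < 1\<close>] i])
        (simp add: s_def)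
  qed
  ultimately show thesis by (rule that)
qed

lemma eventually_Lam_stable:
  fixes A :: "real^'n^'n" and B :: "nat \<Rightarrow> real^'n^'n"
  assumes A: "bounded_below_matrix A"
    and \<delta>: "\<delta> \<longlonglongrightarrow> 0" "\<And>k. 0 \<le> \<delta> k" "\<And>k. close_within (\<delta> k) A (B k)"
  shows "eventually (\<lambda>k. \<forall>i\<in>{1..CARD('n)}. Lam_stable (B k) A i) sequentially"
proof (rule eventually_ball_finite[OF finite_atLeastAtMost], rule ballI)
  fix i assume "i \<in> {1..CARD('n)}"
  then obtain \<epsilon> where "\<epsilon> > 0" and stable: "\<And>\<delta> B. 0 \<le> \<delta> \<Longrightarrow> \<delta> < \<epsilon> \<Longrightarrow> close_within \<delta> A B \<Longrightarrow> Lam_stable B A i"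
    using Lam_stable_near[OF A] by blast
  show "eventually (\<lambda>k. Lam_stable (B k) A i) sequentially"
    using order_tendstoD(2)[OF \<delta>(1) \<open>\<epsilon> > 0\<close>] by eventually_elim (use stable \<delta>(2,3) in blast)
qed

lemma kappa_of_stable:
  fixes A B :: "real^'n^'n"
  assumes "bounded_below_matrix A" "i \<in> {1..CARD('n)}" "Lam_stable B A i"
  shows "\<exists>!c. c \<in> {1..CARD('n)} \<and> Lam c B = Lam i A \<and> (c \<noteq> CARD('n) \<longrightarrow> Lam (c + 1) B \<noteq> Lam i A)"
    (is "\<exists>!c. ?P c")
    and "kappa B A i = dim (Lam i A)"
proof -
  have exists: "?P (dim (Lam i A))"
    using dim_Lam_ge[OF assms(1), of i] dim_subset_UNIV_cart[of "Lam i A"] assms(2,3)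
    unfolding Lam_stable_def by auto
  have unique: "c = dim (Lam i A)" if "?P c" for c
    using that exists by (intro last_Lam_index_unique[of c B "Lam i A" "dim (Lam i A)"]) simp_all
  show "\<exists>!c. ?P c" using exists unique by (rule ex1I)
  have "kappa B A i = (THE c. ?P c)" using assms(2) by (simp add: kappa_def)
  also have "\<dots> = dim (Lam i A)" using exists unique by (rule the_equality)
  finally show "kappa B A i = dim (Lam i A)" .
qed

text \<open>If i' is the first index with a given systole value, then Lambda_{i'-1}(A) has
  dimension exactly i' - 1; otherwise syst_{i'}(A) would already equal syst_{i'-1}(A).\<close>
lemma dim_Lam_before_first_index:
  fixes A :: "real^'n^'n"
  assumes "bounded_below_matrix A" "2 \<le> i'" "i' \<le> CARD('n)"
    and first: "\<forall>m\<in>{1..CARD('n)}. syst m A = syst i' A \<longrightarrow> i' \<le> m"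
  shows "dim (Lam (i' - 1) A) = i' - 1"
proof (rule ccontr)
  assume "dim (Lam (i' - 1) A) \<noteq> i' - 1"
  moreover have "i' - 1 \<le> dim (Lam (i' - 1) A)" using assms(2,3) by (intro dim_Lam_ge[OF assms(1)]) auto
  ultimately have "i' \<le> dim (Lam (i' - 1) A)" by linarith
  hence "syst i' A \<le> syst (i' - 1) A" using assms(2,3) by (intro syst_le_if_le_dim_Lam) auto
  moreover have "syst (i' - 1) A \<le> syst i' A" using assms(3) by (intro syst_mono) auto
  ultimately have "syst (i' - 1) A = syst i' A" by simp
  moreover have "i' - 1 \<in> {1..CARD('n)}" using assms(2,3) by auto
  ultimately have "i' \<le> i' - 1" using first by blast
  thus False using assms(2) by simp
qed

lemma kappa_before_first_index:
  fixes A B :: "real^'n^'n"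
  assumes "bounded_below_matrix A" "i' \<in> {1..CARD('n)}"
    and first: "\<forall>m\<in>{1..CARD('n)}. syst m A = syst i' A \<longrightarrow> i' \<le> m"
    and stable: "\<forall>m\<in>{1..CARD('n)}. Lam_stable B A m"
  shows "kappa B A (i' - 1) = i' - 1"
proof (cases "i' = 1")
  case False
  hence idx: "i' - 1 \<in> {1..CARD('n)}" and "2 \<le> i'" using assms(2) by auto
  have "kappa B A (i' - 1) = dim (Lam (i' - 1) A)"
    using kappa_of_stable(2)[OF assms(1) idx] stable idx by blast
  also have "\<dots> = i' - 1"
    using dim_Lam_before_first_index[OF assms(1) \<open>2 \<le> i'\<close> _ first] assms(2) by simp
  finally show ?thesis .
qed (simp add: kappa_def)

lemma syst_constant_on_block:
  fixes A :: "real^'n^'n"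
  assumes "i \<in> {1..CARD('n)}" "syst i' A = syst i A" "i' \<le> j" "j \<le> dim (Lam i A)"
  shows "syst j A = syst i A"
proof -
  have "j \<le> CARD('n)" using assms(4) dim_subset_UNIV_cart[of "Lam i A"] by simp
  hence "syst i' A \<le> syst j A" using assms(3) by (rule syst_mono[rotated])
  moreover have "syst j A \<le> syst i A" using assms(1,4) by (intro syst_le_if_le_dim_Lam) auto
  ultimately show ?thesis using assms(2) by simp
qed

lemma syst_tendsto_of_close:
  fixes A :: "real^'n^'n" and B :: "nat \<Rightarrow> real^'n^'n"
  assumes \<delta>: "\<delta> \<longlonglongrightarrow> 0" "\<And>k. 0 \<le> \<delta> k" "\<And>k. close_within (\<delta> k) A (B k)"
    and j: "eventually (\<lambda>k. j k \<le> CARD('n) \<and> syst (j k) A = s) sequentially"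
  shows "(\<lambda>k. syst (j k) (B k)) \<longlonglongrightarrow> s"
proof (rule real_tendsto_sandwich)
  show "eventually (\<lambda>k. (1 - \<delta> k) * s \<le> syst (j k) (B k)) sequentially"
    using j order_tendstoD(2)[OF \<delta>(1) zero_less_one]
  proof eventually_elim
    case (elim k)
    thus ?case using syst_close_within(2)[OF \<delta>(3)[of k] \<delta>(2)[of k], of "j k"] by simp
  qed
  show "eventually (\<lambda>k. syst (j k) (B k) \<le> (1 + \<delta> k) * s) sequentially"
    using j
  proof eventually_elim
    case (elim k)
    thus ?case using syst_close_within(1)[OF \<delta>(3)[of k] \<delta>(2)[of k], of "j k"] by simp
  qed
  have "(\<lambda>k. (1 - \<delta> k) * s) \<longlonglongrightarrow> (1 - 0) * s" and "(\<lambda>k. (1 + \<delta> k) * s) \<longlonglongrightarrow> (1 + 0) * s"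
    by (intro tendsto_intros \<delta>(1))+
  thus "(\<lambda>k. (1 - \<delta> k) * s) \<longlonglongrightarrow> s" and "(\<lambda>k. (1 + \<delta> k) * s) \<longlonglongrightarrow> s" by simp_all
qed

theorem filtration_stability:
  fixes B :: "nat \<Rightarrow> real^'n^'n" and A :: "real^'n^'n"
  assumes "invertible A" "B \<longlonglongrightarrow> A"
  shows "\<exists>k0.
     (\<forall>k\<ge>k0. \<forall>i\<in>{1..CARD('n)}. \<exists>!c. c \<in> {1..CARD('n)} \<and> Lam c (B k) = Lam i A \<and>
          (c \<noteq> CARD('n) \<longrightarrow> Lam (c + 1) (B k) \<noteq> Lam i A)) \<and>
     (\<forall>i\<in>{1..CARD('n)}. \<forall>i'. i' \<in> {1..CARD('n)} \<and> syst i' A = syst i A \<and>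
          (\<forall>m\<in>{1..CARD('n)}. syst m A = syst i A \<longrightarrow> i' \<le> m) \<longrightarrow>
        (\<forall>j :: nat \<Rightarrow> nat. (\<forall>k\<ge>k0. kappa (B k) A (i' - 1) < j k \<and> j k \<le> kappa (B k) A i) \<longrightarrow>
           (\<lambda>k. syst (j k) (B k)) \<longlonglongrightarrow> syst i A))"
proof -
  have A: "bounded_below_matrix A" using assms(1) by (rule invertible_imp_bounded_below)
  obtain \<delta> where \<delta>: "\<delta> \<longlonglongrightarrow> 0" "\<And>k. 0 \<le> \<delta> k" "\<And>k. close_within (\<delta> k) A (B k)"
    using tendsto_imp_close_within[OF A assms(2)] by blast
  obtain k0 where stable: "\<And>k. k \<ge> k0 \<Longrightarrow> \<forall>i\<in>{1..CARD('n)}. Lam_stable (B k) A i"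
    using eventually_Lam_stable[OF A \<delta>] unfolding eventually_sequentially by blast
  show ?thesis
  proof (intro exI[of _ k0] conjI allI impI ballI)
    fix k i assume "k0 \<le> k" "i \<in> {1..CARD('n)}"
    thus "\<exists>!c. c \<in> {1..CARD('n)} \<and> Lam c (B k) = Lam i A \<and> (c \<noteq> CARD('n) \<longrightarrow> Lam (c + 1) (B k) \<noteq> Lam i A)"
      using kappa_of_stable(1)[OF A] stable by simp
  next
    fix i i' and j :: "nat \<Rightarrow> nat"
    assume i: "i \<in> {1..CARD('n)}"
      and i': "i' \<in> {1..CARD('n)} \<and> syst i' A = syst i A \<and> (\<forall>m\<in>{1..CARD('n)}. syst m A = syst i A \<longrightarrow> i' \<le> m)"
      and j: "\<forall>k\<ge>k0. kappa (B k) A (i' - 1) < j k \<and> j k \<le> kappa (B k) A i"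
    have first: "\<forall>m\<in>{1..CARD('n)}. syst m A = syst i' A \<longrightarrow> i' \<le> m" using i' by simp
    have block: "j k \<le> CARD('n) \<and> syst (j k) A = syst i A" if "k \<ge> k0" for k
    proof -
      have "kappa (B k) A (i' - 1) = i' - 1"
        using kappa_before_first_index[OF A _ first stable[OF that]] i' by blast
      moreover have "kappa (B k) A i = dim (Lam i A)"
        using kappa_of_stable(2)[OF A i] stable[OF that] i by blast
      ultimately have "i' \<le> j k" "j k \<le> dim (Lam i A)" using j that by auto
      moreover have "dim (Lam i A) \<le> CARD('n)" by (rule dim_subset_UNIV_cart)
      ultimately show ?thesis using syst_constant_on_block[OF i, where A = A and i' = i' and j = "j k"] i' by auto
    qed
    show "(\<lambda>k. syst (j k) (B k)) \<longlonglongrightarrow> syst i A"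
      by (rule syst_tendsto_of_close[OF \<delta>]) (use block in \<open>auto simp: eventually_sequentially\<close>)
  qed
qed

text \<open>Convergence in S_n means convergence of suitable representatives; since systoles,
  the filtration and kappa are invariant under SO_n, the main theorem follows.\<close>
theorem mainTheorem10:
  fixes As :: "nat \<Rightarrow> real^'n^'n" and A :: "real^'n^'n"
  assumes "\<forall>k. As k \<in> SL" and "A \<in> SL"
    and "converges_Sn As A"
  shows "\<exists>k0.
     (\<forall>k\<ge>k0. \<forall>i\<in>{1..CARD('n)}. \<exists>!c. c \<in> {1..CARD('n)} \<and> Lam c (As k) = Lam i A \<and>
          (c \<noteq> CARD('n) \<longrightarrow> Lam (c + 1) (As k) \<noteq> Lam i A)) \<and>
     (\<forall>i\<in>{1..CARD('n)}. \<forall>i'. i' \<in> {1..CARD('n)} \<and> syst i' A = syst i A \<and>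
          (\<forall>m\<in>{1..CARD('n)}. syst m A = syst i A \<longrightarrow> i' \<le> m) \<longrightarrow>
        (\<forall>j :: nat \<Rightarrow> nat. (\<forall>k\<ge>k0. kappa (As k) A (i' - 1) < j k \<and> j k \<le> kappa (As k) A i) \<longrightarrow>
           (\<lambda>k. syst (j k) (As k)) \<longlonglongrightarrow> syst i A))"
proof -
  obtain Q where Q: "\<And>k. Q k \<in> SO" and QA: "(\<lambda>k. Q k ** As k) \<longlonglongrightarrow> A"
    using assms(3) unfolding converges_Sn_def by blast
  have "orthogonal_matrix (Q k)" for k using Q by (simp add: SO_def)
  note invariant = orthogonal_mult_invariant[OF this]
  have "invertible A" using assms(2) by (simp add: SL_def invertible_det_nz)
  from filtration_stability[OF this QA] show ?thesis by (simp only: invariant)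
qed

end
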